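(* Let $\mathbf x_1,\dots,\mathbf x_l\in\mathbb{R}^n$ and $y_1,\dots,y_l\in\{1,-1\}$; set $\bar{\mathbf x}_i=y_i\mathbf x_i$ and let $\overline{\mathbf X}\in\mathbb{R}^{l\times n}$ have $i$-th row $\bar{\mathbf x}_i^T$. For $C>0$ consider the SVM problem $$\min_{\mathbf w}\tfrac12\|\mathbf w\|^2+C\sum_{i=1}^l\big[1-\mathbf w^T(y_i\mathbf x_i)\big]_+$$ with optimal solution $\mathbf w^*(C)$, and its dual $\min_{\theta\in[0,1]^l}\frac C2\|\overline{\mathbf X}^T\theta\|^2-\sum_{i=1}^l\theta_i$ with optimal solution $\theta^*(C)$. Let $0<C_1<\dots<C_{\mathcal K}$ and suppose $\theta^*(C_k)$ is known for some integer $1\le k<\mathcal K$. If $$\tfrac{C_{k+1}+C_k}{2}\langle\overline{\mathbf X}^T\theta^*(C_k),\bar{\mathbf x}_i\rangle-\tfrac{C_{k+1}-C_k}{2}\|\overline{\mathbf X}^T\theta^*(C_k)\|\,\|\bar{\mathbf x}_i\|>1,$$ then $[\theta^*(C_{k+1})]_i=0$, i.e., $i\in\mathcal R$ (at $C=C_{k+1}$). Similarly, if $$\tfrac{C_{k+1}+C_k}{2}\langle\overline{\mathbf X}^T\theta^*(C_k),\bar{\mathbf x}_i\rangle+\tfrac{C_{k+1}-C_k}{2}\|\overline{\mathbf X}^T\theta^*(C_k)\|\,\|\bar{\mathbf x}_i\|<1,$$ then $[\theta^*(C_{k+1})]_i=1$, i.e., $i\in\mathcal L$.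
   Context: $[t]_+=\max\{t,0\}$. Primal and dual solutions satisfy $\mathbf w^*(C)=C\overline{\mathbf X}^T\theta^*(C)$. At parameter $C$: $\mathcal R=\{i:\langle\mathbf w^*(C),\bar{\mathbf x}_i\rangle>1\}$ and $\mathcal L=\{i:\langle\mathbf w^*(C),\bar{\mathbf x}_i\rangle<1\}$. *)

theory Defs
  imports "HOL-Analysis.Analysis"
begin

text \<open>Training data: samples indexed by a finite type 'm (so l = CARD('m)),
  features in real^'n.  x i is the i-th sample, y i its label.\<close>

definition hinge :: "real \<Rightarrow> real" where
  "hinge t = max t 0"

definition xbar :: "('m \<Rightarrow> real^'n) \<Rightarrow> ('m \<Rightarrow> real) \<Rightarrow> 'm \<Rightarrow> real^'n" where
  "xbar x y i = y i *\<^sub>R x i"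

definition XbarT :: "('m::finite \<Rightarrow> real^'n) \<Rightarrow> ('m \<Rightarrow> real) \<Rightarrow> real^'m \<Rightarrow> real^'n" where
  "XbarT x y \<theta> = (\<Sum>i\<in>UNIV. (\<theta> $ i) *\<^sub>R xbar x y i)"

definition primal_obj :: "('m::finite \<Rightarrow> real^'n) \<Rightarrow> ('m \<Rightarrow> real) \<Rightarrow> real \<Rightarrow> real^'n \<Rightarrow> real" where
  "primal_obj x y C w = (1/2) * (norm w)\<^sup>2 + C * (\<Sum>i\<in>UNIV. hinge (1 - w \<bullet> (y i *\<^sub>R x i)))"

definition dual_obj :: "('m::finite \<Rightarrow> real^'n) \<Rightarrow> ('m \<Rightarrow> real) \<Rightarrow> real \<Rightarrow> real^'m \<Rightarrow> real" where
  "dual_obj x y C \<theta> = (C/2) * (norm (XbarT x y \<theta>))\<^sup>2 - (\<Sum>i\<in>UNIV. \<theta> $ i)"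

definition dual_feasible :: "real^'m \<Rightarrow> bool" where
  "dual_feasible \<theta> \<longleftrightarrow> (\<forall>i. 0 \<le> \<theta> $ i \<and> \<theta> $ i \<le> 1)"

definition primal_optimal :: "('m::finite \<Rightarrow> real^'n) \<Rightarrow> ('m \<Rightarrow> real) \<Rightarrow> real \<Rightarrow> real^'n \<Rightarrow> bool" where
  "primal_optimal x y C w \<longleftrightarrow> (\<forall>w'. primal_obj x y C w \<le> primal_obj x y C w')"

definition dual_optimal :: "('m::finite \<Rightarrow> real^'n) \<Rightarrow> ('m \<Rightarrow> real) \<Rightarrow> real \<Rightarrow> real^'m \<Rightarrow> bool" where
  "dual_optimal x y C \<theta> \<longleftrightarrow> dual_feasible \<theta> \<and>
     (\<forall>\<theta>'. dual_feasible \<theta>' \<longrightarrow> dual_obj x y C \<theta> \<le> dual_obj x y C \<theta>')"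

end

theory Submission
  imports Defs
begin

text \<open>Let \<open>C = C\<^sub>k < C' = C\<^sub>k\<^sub>+\<^sub>1\<close>, \<open>u = XbarT \<theta>\<^sup>*(C)\<close> and \<open>u' = XbarT \<theta>\<^sup>*(C')\<close>.
  Testing the optimality of each dual solution against the other gives two variational
  inequalities whose sum, multiplied by \<open>C'\<close>, says that \<open>w\<^sup>*(C') = C' u'\<close> lies in the ball
  with centre \<open>(C + C')/2 \<cdot> u\<close> and radius \<open>(C' - C)/2 \<cdot> \<parallel>u\<parallel>\<close>. By Cauchy-Schwarz the
  hypotheses then fix the side of 1 on which the margin \<open>\<langle>w\<^sup>*(C'), x\<^sub>i\<rangle>\<close> lies, and the
  KKT conditions of the dual turn this into \<open>\<theta>\<^sup>*(C')\<^sub>i = 0\<close> resp. \<open>= 1\<close>.\<close>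

lemma linear_XbarT: "linear (XbarT x y)"
  by (rule linearI) (simp_all add: XbarT_def scaleR_add_left sum.distrib scaleR_sum_right)

lemma XbarT_axis: "XbarT x y (axis i c) = c *\<^sub>R xbar x y i"
  unfolding XbarT_def axis_def by (simp add: if_distrib[of "\<lambda>c. c *\<^sub>R _"] cong: if_cong)

lemma inner_XbarT_left: "XbarT x y \<theta> \<bullet> v = (\<Sum>j\<in>UNIV. \<theta> $ j * (xbar x y j \<bullet> v))"
  unfolding XbarT_def by (simp add: inner_sum_left)

lemma primal_obj_xbar:
  "primal_obj x y C w = (1/2) * (norm w)\<^sup>2 + C * (\<Sum>i\<in>UNIV. hinge (1 - w \<bullet> xbar x y i))"
  by (simp add: primal_obj_def xbar_def)

lemma dual_feasible_iff_cbox: "dual_feasible \<theta> \<longleftrightarrow> \<theta> \<in> cbox 0 (vec 1)"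
  by (simp add: dual_feasible_def mem_box_cart)

lemma convex_dual_feasible: "convex {\<theta>. dual_feasible \<theta>}"
  using convex_box(1) by (simp add: dual_feasible_iff_cbox)

lemma hinge_ge_scaled:
  assumes "0 \<le> a" "a \<le> 1"
  shows "a * t \<le> hinge t"
  using assms mult_left_le_one_le[of t a]
  by (cases "0 \<le> t") (auto simp: hinge_def mult_nonneg_nonpos)

lemma nonneg_if_nonneg_at_right:
  fixes a b :: real
  assumes "\<And>t. 0 < t \<Longrightarrow> t < 1 \<Longrightarrow> 0 \<le> a + t * b"
  shows "0 \<le> a"
proof (rule tendsto_lowerbound)
  show "((\<lambda>t. a + t * b) \<longlongrightarrow> a) (at_right 0)"
    by (auto intro!: tendsto_eq_intros)
  show "\<forall>\<^sub>F t in at_right 0. 0 \<le> a + t * b"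
    unfolding eventually_at_right_field using assms by (intro exI[of _ 1]) auto
qed simp

text \<open>The right-hand side is the derivative of \<open>dual_obj\<close> at \<open>\<theta>\<close> in direction \<open>\<theta>' - \<theta>\<close>.\<close>

lemma dual_optimal_variational_ineq:
  assumes opt: "dual_optimal x y C \<theta>" and feas: "dual_feasible \<theta>'"
  shows "0 \<le> C * (XbarT x y \<theta> \<bullet> XbarT x y (\<theta>' - \<theta>)) - (\<Sum>j\<in>UNIV. (\<theta>' - \<theta>) $ j)"
proof (rule nonneg_if_nonneg_at_right)
  fix t :: real assume t: "0 < t" "t < 1"
  define u v s where "u = XbarT x y \<theta>" and "v = XbarT x y (\<theta>' - \<theta>)"
    and "s = (\<Sum>j\<in>UNIV. (\<theta>' - \<theta>) $ j)"
  have "dual_feasible \<theta>" using opt by (simp add: dual_optimal_def)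
  with feas t have "dual_feasible ((1 - t) *\<^sub>R \<theta> + t *\<^sub>R \<theta>')"
    using convexD_alt[OF convex_dual_feasible, of \<theta> \<theta>' t] by simp
  moreover have "(1 - t) *\<^sub>R \<theta> + t *\<^sub>R \<theta>' = \<theta> + t *\<^sub>R (\<theta>' - \<theta>)"
    by (simp add: algebra_simps)
  ultimately have "dual_obj x y C \<theta> \<le> dual_obj x y C (\<theta> + t *\<^sub>R (\<theta>' - \<theta>))"
    using opt by (simp add: dual_optimal_def)
  also have "\<dots> = dual_obj x y C \<theta> + t * ((C * (u \<bullet> v) - s) + t * (C/2 * (v \<bullet> v)))"
  proof -
    have "XbarT x y (\<theta> + t *\<^sub>R (\<theta>' - \<theta>)) = u + t *\<^sub>R v"
      by (simp add: u_def v_def linear_add[OF linear_XbarT] linear_scale[OF linear_XbarT])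
    moreover have "(\<Sum>j\<in>UNIV. (\<theta> + t *\<^sub>R (\<theta>' - \<theta>)) $ j) = (\<Sum>j\<in>UNIV. \<theta> $ j) + t * s"
      by (simp add: s_def sum.distrib sum_distrib_left)
    ultimately show ?thesis
      unfolding dual_obj_def power2_norm_eq_inner
      by (simp add: u_def inner_add inner_commute algebra_simps)
  qed
  finally show "0 \<le> (C * (u \<bullet> v) - s) + t * (C/2 * (v \<bullet> v))"
    using t by (simp add: zero_le_mult_iff)
qed

lemma dual_optimal_coord_ineq:
  assumes opt: "dual_optimal x y C \<theta>" and s: "0 \<le> s" "s \<le> 1"
  shows "0 \<le> (s - \<theta> $ i) * (C * (XbarT x y \<theta> \<bullet> xbar x y i) - 1)"
proof -
  define \<theta>' where "\<theta>' = \<theta> + axis i (s - \<theta> $ i)"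
  have "dual_feasible \<theta>"
    using opt by (simp add: dual_optimal_def)
  then have "dual_feasible \<theta>'"
    using s by (auto simp: dual_feasible_def \<theta>'_def axis_def)
  moreover have "(\<Sum>j\<in>UNIV. axis i (s - \<theta> $ i) $ j) = s - \<theta> $ i"
    by (simp add: axis_def)
  ultimately show ?thesis
    using dual_optimal_variational_ineq[OF opt, of \<theta>']
    by (simp add: \<theta>'_def XbarT_axis algebra_simps)
qed

lemma dual_optimal_coord_eq_0:
  assumes "dual_optimal x y C \<theta>" and "C * (XbarT x y \<theta> \<bullet> xbar x y i) > 1"
  shows "\<theta> $ i = 0"
  using dual_optimal_coord_ineq[OF assms(1), of 0 i] assms
  by (simp add: dual_optimal_def dual_feasible_def mult_le_0_iff order_antisym)

lemma dual_optimal_coord_eq_1: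
  assumes "dual_optimal x y C \<theta>" and "C * (XbarT x y \<theta> \<bullet> xbar x y i) < 1"
  shows "\<theta> $ i = 1"
  using dual_optimal_coord_ineq[OF assms(1), of 1 i] assms
  by (simp add: dual_optimal_def dual_feasible_def zero_le_mult_iff order_antisym)

lemma hinge_at_dual_solution:
  assumes "dual_optimal x y C \<theta>"
  shows "hinge (1 - C *\<^sub>R XbarT x y \<theta> \<bullet> xbar x y j)
           = \<theta> $ j * (1 - C *\<^sub>R XbarT x y \<theta> \<bullet> xbar x y j)"
  using dual_optimal_coord_eq_0[OF assms, of j] dual_optimal_coord_eq_1[OF assms, of j]
  by (cases "C * (XbarT x y \<theta> \<bullet> xbar x y j)" "1 :: real" rule: linorder_cases)
     (auto simp: hinge_def)

text \<open>Lagrangian bound: for \<open>w\<^sub>0 = C \<cdot> XbarT \<theta>\<close>, the primal objective exceeds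
  \<open>\<parallel>w\<parallel>\<^sup>2/2 + C (\<Sum>\<theta> - \<langle>XbarT \<theta>, w\<rangle>)\<close>, with equality at \<open>w\<^sub>0\<close> by complementary slackness, and
  this quadratic equals the primal value at \<open>w\<^sub>0\<close> plus \<open>\<parallel>w - w\<^sub>0\<parallel>\<^sup>2/2\<close>.\<close>

lemma primal_obj_ge_at_dual_solution:
  assumes opt: "dual_optimal x y C \<theta>" and C: "0 \<le> C"
  shows "primal_obj x y C (C *\<^sub>R XbarT x y \<theta>) + (1/2) * (norm (w - C *\<^sub>R XbarT x y \<theta>))\<^sup>2
           \<le> primal_obj x y C w"
proof -
  define u where "u = XbarT x y \<theta>"
  define L where "L v = (1/2) * (v \<bullet> v) + C * ((\<Sum>j\<in>UNIV. \<theta> $ j) - u \<bullet> v)" for v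
  have lagrangian:
    "(\<Sum>j\<in>UNIV. \<theta> $ j * (1 - v \<bullet> xbar x y j)) = (\<Sum>j\<in>UNIV. \<theta> $ j) - u \<bullet> v" for v
    by (simp add: u_def inner_XbarT_left inner_commute[of v] right_diff_distrib sum_subtractf)
  have "\<theta> $ j \<in> {0..1}" for j
    using opt by (simp add: dual_optimal_def dual_feasible_def)
  then have "L w \<le> primal_obj x y C w"
    unfolding L_def primal_obj_xbar lagrangian[symmetric] power2_norm_eq_inner
    using C by (intro add_left_mono mult_left_mono sum_mono hinge_ge_scaled) auto
  moreover have "L w = L (C *\<^sub>R u) + (1/2) * (norm (w - C *\<^sub>R u))\<^sup>2"
    unfolding L_def power2_norm_eq_inner by (simp add: inner_diff inner_commute algebra_simps)
  moreover have "L (C *\<^sub>R u) = primal_obj x y C (C *\<^sub>R u)"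
    unfolding L_def primal_obj_xbar hinge_at_dual_solution[OF opt, folded u_def] lagrangian
      power2_norm_eq_inner ..
  ultimately show ?thesis by (simp add: u_def)
qed

lemma primal_optimal_eq_dual_solution:
  assumes "dual_optimal x y C \<theta>" and "0 \<le> C" and "primal_optimal x y C w"
  shows "w = C *\<^sub>R XbarT x y \<theta>"
proof -
  have "primal_obj x y C w \<le> primal_obj x y C (C *\<^sub>R XbarT x y \<theta>)"
    using assms(3) by (simp add: primal_optimal_def)
  with primal_obj_ge_at_dual_solution[OF assms(1,2), of w]
  have "(norm (w - C *\<^sub>R XbarT x y \<theta>))\<^sup>2 \<le> 0" by linarith
  then show ?thesis by simp
qed

lemma dual_solution_in_ball:
  assumes optC: "dual_optimal x y C \<theta>\<^sub>C" and optD: "dual_optimal x y D \<theta>\<^sub>D" and D: "0 \<le> D"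
  shows "norm (D *\<^sub>R XbarT x y \<theta>\<^sub>D - ((C + D)/2) *\<^sub>R XbarT x y \<theta>\<^sub>C)
           \<le> \<bar>D - C\<bar>/2 * norm (XbarT x y \<theta>\<^sub>C)"
proof (rule power2_le_imp_le)
  define u v where "u = XbarT x y \<theta>\<^sub>C" and "v = XbarT x y \<theta>\<^sub>D"
  have feas: "dual_feasible \<theta>\<^sub>C" "dual_feasible \<theta>\<^sub>D"
    using optC optD by (simp_all add: dual_optimal_def)
  have "0 \<le> C * (u \<bullet> (v - u)) - (\<Sum>j\<in>UNIV. (\<theta>\<^sub>D - \<theta>\<^sub>C) $ j)"
       "0 \<le> D * (v \<bullet> (u - v)) - (\<Sum>j\<in>UNIV. (\<theta>\<^sub>C - \<theta>\<^sub>D) $ j)"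
    using dual_optimal_variational_ineq[OF optC feas(2)]
      dual_optimal_variational_ineq[OF optD feas(1)]
    by (simp_all add: u_def v_def linear_diff[OF linear_XbarT])
  then have "0 \<le> C * (u \<bullet> v - u \<bullet> u) + D * (u \<bullet> v - v \<bullet> v)"
    by (simp add: inner_diff inner_commute sum_subtractf algebra_simps)
  then have "C * D * (u \<bullet> u) + D\<^sup>2 * (v \<bullet> v) \<le> (C + D) * D * (u \<bullet> v)"
    using mult_left_mono[OF _ D] by (fastforce simp: power2_eq_square algebra_simps)
  moreover have "(norm (D *\<^sub>R v - ((C + D)/2) *\<^sub>R u))\<^sup>2
      = D\<^sup>2 * (v \<bullet> v) - (C + D) * D * (u \<bullet> v) + ((C + D)/2)\<^sup>2 * (u \<bullet> u)"
    unfolding power2_norm_eq_inner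
    by (simp add: inner_diff inner_commute algebra_simps power2_eq_square) (simp add: field_simps)
  moreover have "((C + D)/2)\<^sup>2 * (u \<bullet> u) = C * D * (u \<bullet> u) + (\<bar>D - C\<bar>/2 * norm u)\<^sup>2"
    unfolding power_mult_distrib power_divide power2_abs power2_norm_eq_inner
    by (simp add: power2_eq_square field_simps)
  ultimately show "(norm (D *\<^sub>R v - ((C + D)/2) *\<^sub>R u))\<^sup>2 \<le> (\<bar>D - C\<bar>/2 * norm u)\<^sup>2"
    by linarith
qed simp

lemma inner_diff_le_of_norm_diff_le:
  fixes w m v :: "'a::real_inner"
  assumes "norm (w - m) \<le> r"
  shows "\<bar>w \<bullet> v - m \<bullet> v\<bar> \<le> r * norm v"
  using Cauchy_Schwarz_ineq2[of "w - m" v] mult_right_mono[OF assms norm_ge_zero[of v]]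
  by (simp add: inner_diff_left)

theorem corollary3:
  fixes x :: "'m::finite \<Rightarrow> real^'n" and y :: "'m \<Rightarrow> real"
    and Cs :: "nat \<Rightarrow> real" and K k :: nat and i :: 'm
    and \<theta>k \<theta>k1 :: "real^'m"
  assumes labels: "\<forall>j. y j = 1 \<or> y j = -1"
    and Cpos: "0 < Cs 1"
    and Cinc: "\<forall>j. 1 \<le> j \<and> j < K \<longrightarrow> Cs j < Cs (Suc j)"
    and krange: "1 \<le> k" "k < K"
    and optk: "dual_optimal x y (Cs k) \<theta>k"
    and optk1: "dual_optimal x y (Cs (Suc k)) \<theta>k1"
  shows
    "((Cs (Suc k) + Cs k)/2 * (XbarT x y \<theta>k \<bullet> xbar x y i)
        - (Cs (Suc k) - Cs k)/2 * norm (XbarT x y \<theta>k) * norm (xbar x y i) > 1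
      \<longrightarrow> \<theta>k1 $ i = 0 \<and>
          (\<forall>w. primal_optimal x y (Cs (Suc k)) w \<longrightarrow> w \<bullet> xbar x y i > 1))
   \<and> ((Cs (Suc k) + Cs k)/2 * (XbarT x y \<theta>k \<bullet> xbar x y i)
        + (Cs (Suc k) - Cs k)/2 * norm (XbarT x y \<theta>k) * norm (xbar x y i) < 1
      \<longrightarrow> \<theta>k1 $ i = 1 \<and>
          (\<forall>w. primal_optimal x y (Cs (Suc k)) w \<longrightarrow> w \<bullet> xbar x y i < 1))"
proof -
  define C D where "C = Cs k" and "D = Cs (Suc k)"
  note optk1 = optk1[folded D_def]
  have "Cs 1 \<le> Cs k"
    using krange(1) by (induction k rule: dec_induct) (use Cinc krange in \<open>force+\<close>)
  then have CD: "0 < C" "C < D"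
    using Cpos Cinc krange by (auto simp: C_def D_def)
  have margin: "\<bar>D * (XbarT x y \<theta>k1 \<bullet> xbar x y i) - (D + C)/2 * (XbarT x y \<theta>k \<bullet> xbar x y i)\<bar>
                  \<le> (D - C)/2 * norm (XbarT x y \<theta>k) * norm (xbar x y i)"
    using inner_diff_le_of_norm_diff_le[OF dual_solution_in_ball[OF optk[folded C_def] optk1]] CD
    by (simp add: add.commute)
  have primal: "w \<bullet> xbar x y i = D * (XbarT x y \<theta>k1 \<bullet> xbar x y i)"
    if "primal_optimal x y D w" for w
    using primal_optimal_eq_dual_solution[OF optk1 _ that] CD by simp
  show ?thesis
    unfolding C_def[symmetric] D_def[symmetric]
  proof (intro conjI impI)
    assume "(D + C)/2 * (XbarT x y \<theta>k \<bullet> xbar x y i)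
              - (D - C)/2 * norm (XbarT x y \<theta>k) * norm (xbar x y i) > 1"
    then have "D * (XbarT x y \<theta>k1 \<bullet> xbar x y i) > 1" using abs_le_D2[OF margin] by linarith
    then show "\<theta>k1 $ i = 0" "\<forall>w. primal_optimal x y D w \<longrightarrow> w \<bullet> xbar x y i > 1"
      using dual_optimal_coord_eq_0[OF optk1] primal by auto
  next
    assume "(D + C)/2 * (XbarT x y \<theta>k \<bullet> xbar x y i)
              + (D - C)/2 * norm (XbarT x y \<theta>k) * norm (xbar x y i) < 1"
    then have "D * (XbarT x y \<theta>k1 \<bullet> xbar x y i) < 1" using abs_le_D1[OF margin] by linarith
    then show "\<theta>k1 $ i = 1" "\<forall>w. primal_optimal x y D w \<longrightarrow> w \<bullet> xbar x y i < 1"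
      using dual_optimal_coord_eq_1[OF optk1] primal by auto
  qed
qed

end
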